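(* Let $f:\mathbb{R}^n\to\mathbb{R}$ be convex and $M$-Lipschitz continuous, $h$ proper closed convex, $\phi=f+h$, $\lambda>0$, $\delta>0$, and $x_0=w_{k-1}\in\mathrm{dom}\, h$. Let $\psi(u)=\phi(u)+\frac1{2\lambda}\|u-x_0\|^2$. For $j\ge1$ let $\Gamma_j:\mathbb{R}^n\to\mathbb{R}$ be convex functions with $\Gamma_j\le f$ (bundle models), let $x_j=\mathrm{argmin}_{u}\{\Gamma_j(u)+h(u)+\frac1{2\lambda}\|u-x_0\|^2\}$, $m_j=\Gamma_j(x_j)+h(x_j)+\frac1{2\lambda}\|x_j-x_0\|^2$, $\tilde x_j\in\mathrm{Argmin}\{\psi(u):u\in\{x_0,x_1,\dots,x_j\}\}$, and $t_j=\psi(\tilde x_j)-m_j$. Suppose $j$ is the first index with $t_j\le\delta$, and set $$w_k=x_j,\quad \tilde w_k=\tilde x_j,\quad u_k=\frac{x_0-x_j}{\lambda},\quad \eta_k=\phi(\tilde x_j)-(\Gamma_j+h)(x_j)+\frac1\lambda\langle x_0-x_j,x_j-\tilde x_j\rangle.$$ Then $u_k\in\partial_{\eta_k}\phi(\tilde w_k)$, $\|\lambda u_k+\tilde w_k-w_{k-1}\|^2+2\lambda\eta_k\le2\lambda\delta$, and $w_k=w_{k-1}-\lambda u_k$; that is, this step of the modern proximal bundle method is an iteration of the HPE framework.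
   Context: $\partial_\varepsilon\phi(x)=\{s:\phi(y)\ge\phi(x)+\langle s,y-x\rangle-\varepsilon\ \forall y\}$. HPE framework (stepsize $\lambda$, tolerance $\delta$): at iteration $k$, find $(\tilde w_k,u_k,\eta_k)$ with $u_k\in\partial_{\eta_k}\phi(\tilde w_k)$ and $\|\lambda u_k+\tilde w_k-w_{k-1}\|^2+2\lambda\eta_k\le2\lambda\delta$, then set $w_k=w_{k-1}-\lambda u_k$. *)

theory Defs
  imports "HOL-Analysis.Analysis" "HOL-Library.Extended_Real"
begin

definition epigraph :: "('a \<Rightarrow> ereal) \<Rightarrow> ('a \<times> real) set" where
  "epigraph g = {(x, t). g x \<le> ereal t}"

definition edom :: "('a \<Rightarrow> ereal) \<Rightarrow> 'a set" where
  "edom g = {x. g x < \<infinity>}"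

definition proper_fun :: "('a \<Rightarrow> ereal) \<Rightarrow> bool" where
  "proper_fun g \<longleftrightarrow> (\<forall>x. g x \<noteq> -\<infinity>) \<and> (\<exists>x. g x < \<infinity>)"

definition convex_fun :: "('a::real_vector \<Rightarrow> ereal) \<Rightarrow> bool" where
  "convex_fun g \<longleftrightarrow> convex (epigraph g)"

definition closed_fun :: "('a::topological_space \<Rightarrow> ereal) \<Rightarrow> bool" where
  "closed_fun g \<longleftrightarrow> closed (epigraph g)"

definition eps_subdiff :: "('a::real_inner \<Rightarrow> ereal) \<Rightarrow> real \<Rightarrow> 'a \<Rightarrow> 'a set" where
  "eps_subdiff g \<epsilon> x = {s. \<forall>y. g y \<ge> g x + ereal (inner s (y - x) - \<epsilon>)}"

end

theory Submission
  imports Defs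
begin

text \<open>The optimality condition of the prox step says that \<open>(x\<^sub>0 - x\<^sub>j)/\<lambda>\<close> is a subgradient
  of the convex model \<open>\<Gamma>\<^sub>j + h\<close> at \<open>x\<^sub>j\<close>. Since \<open>\<Gamma>\<^sub>j \<le> f\<close>, the resulting affine minorant
  of the model also minorizes \<open>\<phi>\<close>, and an affine minorant of \<open>\<phi>\<close> with slope \<open>s\<close> makes \<open>s\<close>
  an \<open>\<epsilon>\<close>-subgradient at any point, \<open>\<epsilon>\<close> being the gap between \<open>\<phi>\<close> and the minorant there.
  At the best candidate \<open>xt\<^sub>j\<close> this gap is \<open>\<eta>\<^sub>k\<close>, and the HPE error criterion is an exact
  identity: \<open>\<parallel>xt\<^sub>j - x\<^sub>j\<parallel>\<^sup>2 + 2\<lambda>\<eta>\<^sub>k = 2\<lambda>t\<^sub>j \<le> 2\<lambda>\<delta>\<close>.\<close>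

lemma le_if_forall_pos_diff_mult_le:
  fixes P D c :: real
  assumes "\<And>\<tau>. 0 < \<tau> \<Longrightarrow> \<tau> \<le> 1 \<Longrightarrow> P - \<tau> * c \<le> D"
  shows "P \<le> D"
proof -
  have "((\<lambda>\<tau>. P - \<tau> * c) \<longlongrightarrow> P - 0 * c) (at_right 0)"
    by (intro tendsto_intros)
  moreover have "eventually (\<lambda>\<tau>. P - \<tau> * c \<le> D) (at_right 0)"
    unfolding eventually_at_right_field using assms by (intro exI[of _ 1]) auto
  ultimately show ?thesis
    by (auto intro: tendsto_upperbound)
qed

lemma convex_fun_iff:
  "convex_fun F \<longleftrightarrow> (\<forall>x y a b \<tau>. F x \<le> ereal a \<longrightarrow> F y \<le> ereal b \<longrightarrow> 0 \<le> \<tau> \<longrightarrow> \<tau> \<le> 1 \<longrightarrow>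
      F ((1 - \<tau>) *\<^sub>R x + \<tau> *\<^sub>R y) \<le> ereal ((1 - \<tau>) * a + \<tau> * b))"
  unfolding convex_fun_def convex_alt epigraph_def by auto

lemma ereal_add_le_ereal_iff: "ereal c + e \<le> ereal a \<longleftrightarrow> e \<le> ereal (a - c)"
  by (cases e) auto

lemma convex_fun_ereal_add:
  assumes g: "convex_on UNIV g" and h: "convex_fun h"
  shows "convex_fun (\<lambda>u. ereal (g u) + h u)"
  unfolding convex_fun_iff
proof (intro allI impI)
  fix x y :: 'a and a b \<tau> :: real
  assume "ereal (g x) + h x \<le> ereal a" "ereal (g y) + h y \<le> ereal b" and \<tau>: "0 \<le> \<tau>" "\<tau> \<le> 1"
  define z where "z = (1 - \<tau>) *\<^sub>R x + \<tau> *\<^sub>R y"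
  have "h x \<le> ereal (a - g x)" "h y \<le> ereal (b - g y)"
    using \<open>ereal (g x) + h x \<le> ereal a\<close> \<open>ereal (g y) + h y \<le> ereal b\<close>
    by (simp_all add: ereal_add_le_ereal_iff)
  then have "h z \<le> ereal ((1 - \<tau>) * (a - g x) + \<tau> * (b - g y))"
    using h \<tau> by (simp add: convex_fun_iff z_def)
  also have "\<dots> \<le> ereal ((1 - \<tau>) * a + \<tau> * b - g z)"
    using convex_onD[OF g, of \<tau> x y] \<tau> by (simp add: z_def algebra_simps)
  finally show "ereal (g z) + h z \<le> ereal ((1 - \<tau>) * a + \<tau> * b)"
    by (simp add: ereal_add_le_ereal_iff)
qed

lemma norm_add_scaleR_power2:
  fixes a b :: "'a::real_inner"
  shows "norm (a + t *\<^sub>R b) ^ 2 = norm a ^ 2 + 2 * t * inner a b + t ^ 2 * norm b ^ 2"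
  unfolding power2_norm_eq_inner
  by (simp add: inner_add_left inner_add_right inner_commute power2_eq_square algebra_simps)

lemma minimizer_value_finite:
  fixes h :: "'a \<Rightarrow> ereal"
  assumes "\<And>u. h u \<noteq> -\<infinity>" and "h w \<noteq> \<infinity>"
    and "ereal (g x) + h x + ereal (c x) \<le> ereal (g w) + h w + ereal (c w)"
  shows "\<bar>h x\<bar> \<noteq> \<infinity>"
  using assms by (cases "h w") auto

lemma prox_minimizer_subgradient:
  fixes F :: "'a::real_inner \<Rightarrow> ereal"
  assumes F: "convex_fun F" and lam: "lam > 0" and Fx: "F x = ereal a"
    and min: "\<And>u. F x + ereal (norm (x - w) ^ 2 / (2 * lam)) \<le> F u + ereal (norm (u - w) ^ 2 / (2 * lam))"
  shows "ereal (a + inner ((1 / lam) *\<^sub>R (w - x)) (y - x)) \<le> F y"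
proof (cases "F y")
  case MInf
  then show ?thesis using min[of y] Fx by simp
next
  case PInf
  then show ?thesis by simp
next
  case (real b)
  define g where "g = inner ((1 / lam) *\<^sub>R (w - x)) (y - x)"
  let ?c = "norm (y - x) ^ 2 / (2 * lam)"
  have "a + g - \<tau> * ?c \<le> b" if \<tau>: "0 < \<tau>" "\<tau> \<le> 1" for \<tau>
  proof -
    define z where "z = (1 - \<tau>) *\<^sub>R x + \<tau> *\<^sub>R y"
    have "F z \<le> ereal ((1 - \<tau>) * a + \<tau> * b)"
      using F \<tau> Fx real unfolding z_def convex_fun_iff by simp
    then have "a + norm (x - w) ^ 2 / (2 * lam) \<le> (1 - \<tau>) * a + \<tau> * b + norm (z - w) ^ 2 / (2 * lam)"
      using min[of z] Fx by (cases "F z") auto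
    moreover have "z - w = (x - w) + \<tau> *\<^sub>R (y - x)"
      by (simp add: z_def algebra_simps)
    then have "norm (z - w) ^ 2 / (2 * lam) = norm (x - w) ^ 2 / (2 * lam) - \<tau> * g + \<tau> * (\<tau> * ?c)"
      using lam unfolding g_def
      by (simp only: norm_add_scaleR_power2) (simp add: inner_diff_left field_simps power2_eq_square)
    ultimately have "\<tau> * (a + g - \<tau> * ?c) \<le> \<tau> * b"
      by (simp add: algebra_simps)
    then show ?thesis
      using \<tau> by simp
  qed
  then have "a + g \<le> b"
    by (rule le_if_forall_pos_diff_mult_le)
  then show ?thesis
    using real by (simp add: g_def)
qed

lemma eps_subdiff_of_affine_minorant:
  assumes "\<And>y. ereal (a + inner s (y - x)) \<le> \<phi> y" and "\<phi> z = ereal b"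
  shows "s \<in> eps_subdiff \<phi> (b - (a + inner s (z - x))) z"
proof -
  have "\<phi> z + ereal (inner s (y - z) - (b - (a + inner s (z - x)))) = ereal (a + inner s (y - x))" for y
    using assms(2) by (simp add: inner_diff_right)
  then show ?thesis
    using assms(1) by (simp add: eps_subdiff_def)
qed

lemma prox_gap_identity:
  fixes x xt w :: "'a::real_inner"
  assumes "lam \<noteq> 0"
  shows "norm (xt - x) ^ 2 + 2 * lam * (b - a + (1 / lam) * inner (w - x) (x - xt))
    = 2 * lam * ((b + norm (xt - w) ^ 2 / (2 * lam)) - (a + norm (x - w) ^ 2 / (2 * lam)))"
proof -
  have "norm (xt - w) ^ 2 = norm (x - w) ^ 2 + 2 * inner (x - w) (xt - x) + norm (xt - x) ^ 2"
    using norm_add_scaleR_power2[of "x - w" 1 "xt - x"] by simp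
  moreover have "inner (w - x) (x - xt) = inner (x - w) (xt - x)"
    by (simp add: inner_diff_left inner_diff_right)
  ultimately show ?thesis
    using assms by (simp add: field_simps)
qed

theorem lemma3p1:
  fixes f :: "'a::euclidean_space \<Rightarrow> real"
    and h :: "'a \<Rightarrow> ereal"
    and M lam \<delta> :: real
    and w0 :: "'a"
    and \<Gamma> :: "nat \<Rightarrow> 'a \<Rightarrow> real"
    and x xt :: "nat \<Rightarrow> 'a"
    and j :: nat
    and \<phi> \<psi> :: "'a \<Rightarrow> ereal"
    and m t :: "nat \<Rightarrow> ereal"
  assumes f_convex: "convex_on UNIV f"
    and f_lip: "M-lipschitz_on UNIV f"
    and h_proper: "proper_fun h" and h_closed: "closed_fun h" and h_convex: "convex_fun h"
    and phi_def: "\<phi> = (\<lambda>u. ereal (f u) + h u)"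
    and lam_pos: "lam > 0" and del: "\<delta> > 0"
    and w0_dom: "w0 \<in> edom h"
    and x0: "x 0 = w0"
    and psi_def: "\<psi> = (\<lambda>u. \<phi> u + ereal (norm (u - w0) ^ 2 / (2 * lam)))"
    and Gamma_convex: "\<And>i. i \<ge> 1 \<Longrightarrow> convex_on UNIV (\<Gamma> i)"
    and Gamma_le: "\<And>i u. i \<ge> 1 \<Longrightarrow> \<Gamma> i u \<le> f u"
    and x_argmin: "\<And>i u. i \<ge> 1 \<Longrightarrow>
        ereal (\<Gamma> i (x i)) + h (x i) + ereal (norm (x i - w0) ^ 2 / (2 * lam))
        \<le> ereal (\<Gamma> i u) + h u + ereal (norm (u - w0) ^ 2 / (2 * lam))"
    and m_def: "\<And>i. m i = ereal (\<Gamma> i (x i)) + h (x i) + ereal (norm (x i - w0) ^ 2 / (2 * lam))"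
    and xt_mem: "\<And>i. i \<ge> 1 \<Longrightarrow> xt i \<in> x ` {0..i}"
    and xt_min: "\<And>i l. i \<ge> 1 \<Longrightarrow> l \<le> i \<Longrightarrow> \<psi> (xt i) \<le> \<psi> (x l)"
    and t_def: "\<And>i. t i = \<psi> (xt i) - m i"
    and j_pos: "j \<ge> 1"
    and t_j: "t j \<le> ereal \<delta>"
    and t_before: "\<And>i. 1 \<le> i \<Longrightarrow> i < j \<Longrightarrow> t i > ereal \<delta>"
  shows "let wk = x j; wtk = xt j; uk = (1 / lam) *\<^sub>R (w0 - x j);
             etak = real_of_ereal (\<phi> (xt j)) - (\<Gamma> j (x j) + real_of_ereal (h (x j)))
                  + (1 / lam) * inner (w0 - x j) (x j - xt j)
         in uk \<in> eps_subdiff \<phi> etak wtk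
            \<and> norm (lam *\<^sub>R uk + wtk - w0) ^ 2 + 2 * lam * etak \<le> 2 * lam * \<delta>
            \<and> wk = w0 - lam *\<^sub>R uk"
proof -
  let ?q = "\<lambda>u. norm (u - w0) ^ 2 / (2 * lam)"
  let ?u = "(1 / lam) *\<^sub>R (w0 - x j)"
  have h_not_minf: "\<And>u. h u \<noteq> -\<infinity>"
    using h_proper by (simp add: proper_fun_def)
  have h_w0: "h w0 \<noteq> \<infinity>"
    using w0_dom by (simp add: edom_def)
  have h_x_finite: "\<bar>h (x i)\<bar> \<noteq> \<infinity>" for i
  proof (cases "i = 0")
    case True
    then show ?thesis using h_w0 h_not_minf[of w0] x0 by (cases "h w0") auto
  next
    case False
    then show ?thesis
      using x_argmin[of i w0] by (intro minimizer_value_finite[of h w0 "\<Gamma> i" "x i" ?q, OF h_not_minf h_w0]) simp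
  qed
  obtain l where "xt j = x l"
    using xt_mem[OF j_pos] by auto
  define a where "a = \<Gamma> j (x j) + real_of_ereal (h (x j))"
  define b where "b = real_of_ereal (\<phi> (xt j))"
  have model_xj: "ereal (\<Gamma> j (x j)) + h (x j) = ereal a"
    using h_x_finite[of j] by (cases "h (x j)") (auto simp: a_def)
  have phi_xt: "\<phi> (xt j) = ereal b"
    using h_x_finite[of l] \<open>xt j = x l\<close> by (cases "h (x l)") (auto simp: b_def phi_def)
  have minorant: "ereal (a + inner ?u (y - x j)) \<le> \<phi> y" for y
  proof -
    have "ereal (a + inner ?u (y - x j)) \<le> ereal (\<Gamma> j y) + h y"
      by (rule prox_minimizer_subgradient[OF convex_fun_ereal_add[OF Gamma_convex[OF j_pos] h_convex]
            lam_pos model_xj x_argmin[OF j_pos]])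
    also have "\<dots> \<le> \<phi> y"
      unfolding phi_def using Gamma_le[OF j_pos] by (simp add: add_right_mono)
    finally show ?thesis .
  qed
  have "t j = ereal ((b + ?q (xt j)) - (a + ?q (x j)))"
    using model_xj phi_xt by (simp add: t_def m_def psi_def)
  then have gap: "(b + ?q (xt j)) - (a + ?q (x j)) \<le> \<delta>"
    using t_j by simp
  let ?\<eta> = "real_of_ereal (\<phi> (xt j)) - (\<Gamma> j (x j) + real_of_ereal (h (x j)))
      + (1 / lam) * inner (w0 - x j) (x j - xt j)"
  have "?\<eta> = b - (a + inner ?u (xt j - x j))"
    by (simp add: a_def b_def inner_diff_right diff_divide_distrib)
  then have subdiff: "?u \<in> eps_subdiff \<phi> ?\<eta> (xt j)"
    using eps_subdiff_of_affine_minorant[OF minorant phi_xt] by simp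
  have scaled_u: "lam *\<^sub>R ?u + xt j - w0 = xt j - x j"
    using lam_pos by simp
  have "norm (lam *\<^sub>R ?u + xt j - w0) ^ 2 + 2 * lam * ?\<eta>
      = norm (xt j - x j) ^ 2 + 2 * lam * (b - a + (1 / lam) * inner (w0 - x j) (x j - xt j))"
    by (simp only: scaled_u a_def b_def)
  also have "\<dots> = 2 * lam * ((b + ?q (xt j)) - (a + ?q (x j)))"
    using lam_pos by (intro prox_gap_identity) simp
  also have "\<dots> \<le> 2 * lam * \<delta>"
    using gap lam_pos by simp
  finally have residual: "norm (lam *\<^sub>R ?u + xt j - w0) ^ 2 + 2 * lam * ?\<eta> \<le> 2 * lam * \<delta>" .
  show ?thesis
    unfolding Let_def using subdiff residual lam_pos by simp
qed

end
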